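(* Let $a,b\in\mathbb R$ be such that the cubic $\Gamma_{a,b}:Y^2Z=X^3+aX^2Z+bXZ^2$ is non-singular, let $r_0,r_1\in\mathbb R\setminus\{0\}$ with $(r_0:r_1:1)\in\Gamma_{a,b}$, put $\alpha=r_0^3/r_1^2$, $\beta=a r_0^2/r_1^2$, $\gamma=b r_0/r_1^2$, and let $\Gamma_{\alpha,\beta,\gamma}$ be the curve $y^2x=\alpha+\beta x+\gamma x^2$ (so $\alpha+\beta+\gamma=1$ and $(1,1)\in\Gamma_{\alpha,\beta,\gamma}$), with conjugation $P\mapsto\bar P$ as described in the context. Let $A=(x_0,y_0)$ be an arbitrary but fixed point on $\Gamma_{\alpha,\beta,\gamma}$. For every point $P$ on $\Gamma_{\alpha,\beta,\gamma}$ different from $A$ and $\bar A$, let $g:=AP$ and $\bar g:=A\bar P$. Then the mapping $I_A:g\mapsto\bar g$ is a line involution (of the pencil of lines through $A$).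
   Context: On $\Gamma_{a,b}$ one uses the chord-tangent group law with neutral element the inflection point $\mathcal O=(0:1:0)$; the point $T=(0:0:1)$ has order 2, and the conjugate of a point $P\in\Gamma_{a,b}$ is $\bar P:=T+P$. The projective map $(X:Y:Z)\mapsto(x,y)=\big(r_0Z/X,\ r_0Y/(r_1X)\big)$ (in homogeneous form $(X:Y:Z)\mapsto(r_0Z:r_0Y/r_1:X)$) carries $\Gamma_{a,b}$ onto (the projective closure of) $\Gamma_{\alpha,\beta,\gamma}$ and $(r_0:r_1:1)$ to $(1,1)$; conjugation on $\Gamma_{\alpha,\beta,\gamma}$ is transported via this map. Equivalently, on $\Gamma_{\alpha,\beta,\gamma}$, $\bar P=P+T'$ in the group law with neutral element $(0:1:0)$ (the vertical point at infinity) and $T'=(1:0:0)$ (the horizontal point at infinity). A line involution of the pencil of lines through a point is a map from the pencil to itself which is an involution and preserves cross-ratios of lines. *)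

theory Defs
  imports Complex_Main
begin

definition cubF :: "real \<Rightarrow> real \<Rightarrow> real \<Rightarrow> real \<Rightarrow> real \<Rightarrow> real" where
  "cubF a b X Y Z = Y^2 * Z - X^3 - a * X^2 * Z - b * X * Z^2"

definition cubF_X :: "real \<Rightarrow> real \<Rightarrow> real \<Rightarrow> real \<Rightarrow> real \<Rightarrow> real" where
  "cubF_X a b X Y Z = - 3 * X^2 - 2 * a * X * Z - b * Z^2"

definition cubF_Y :: "real \<Rightarrow> real \<Rightarrow> real \<Rightarrow> real \<Rightarrow> real \<Rightarrow> real" where
  "cubF_Y a b X Y Z = 2 * Y * Z"

definition cubF_Z :: "real \<Rightarrow> real \<Rightarrow> real \<Rightarrow> real \<Rightarrow> real \<Rightarrow> real" where
  "cubF_Z a b X Y Z = Y^2 - a * X^2 - 2 * b * X * Z"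

definition nonsingular_cubic :: "real \<Rightarrow> real \<Rightarrow> bool" where
  "nonsingular_cubic a b \<longleftrightarrow>
     (\<forall>X Y Z. (X, Y, Z) \<noteq> (0, 0, 0) \<and> cubF a b X Y Z = 0 \<longrightarrow>
        \<not> (cubF_X a b X Y Z = 0 \<and> cubF_Y a b X Y Z = 0 \<and> cubF_Z a b X Y Z = 0))"

text \<open>Points of the projective closure of Gamma_{alpha,beta,gamma}: y^2 x = alpha + beta x + gamma x^2,
  homogeneously y^2 x = alpha w^3 + beta x w^2 + gamma x^2 w.  The points at infinity
  are InfV = (0:1:0) (vertical direction, the neutral element) and InfH = (1:0:0)
  (horizontal direction, the point T').\<close>
datatype ppt = Aff real real | InfV | InfH

fun on_curve :: "real \<Rightarrow> real \<Rightarrow> real \<Rightarrow> ppt \<Rightarrow> bool" where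
  "on_curve \<alpha> \<beta> \<gamma> (Aff x y) \<longleftrightarrow> y^2 * x = \<alpha> + \<beta> * x + \<gamma> * x^2"
| "on_curve \<alpha> \<beta> \<gamma> InfV \<longleftrightarrow> True"
| "on_curve \<alpha> \<beta> \<gamma> InfH \<longleftrightarrow> True"

text \<open>Conjugation P |-> P + T' (chord-tangent law, neutral element InfV, T' = InfH).
  For an affine point (x,y): the horizontal line through P and T' meets the curve again in
  (alpha/(gamma x), y); the vertical line through that point and InfV meets it again in
  (alpha/(gamma x), -y).  This is exactly the transport of P |-> T+P on Gamma_{a,b}
  (which sends (X,Y) to (b/X, -bY/X^2)).\<close>
fun conj_pt :: "real \<Rightarrow> real \<Rightarrow> ppt \<Rightarrow> ppt" where
  "conj_pt \<alpha> \<gamma> (Aff x y) = Aff (\<alpha> / (\<gamma> * x)) (- y)"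
| "conj_pt \<alpha> \<gamma> InfV = InfH"
| "conj_pt \<alpha> \<gamma> InfH = InfV"

fun dir_to :: "real \<times> real \<Rightarrow> ppt \<Rightarrow> real \<times> real" where
  "dir_to A (Aff x y) = (x - fst A, y - snd A)"
| "dir_to A InfV = (0, 1)"
| "dir_to A InfH = (1, 0)"

definition line_through :: "real \<times> real \<Rightarrow> real \<times> real \<Rightarrow> (real \<times> real) set" where
  "line_through A d = {(fst A + t * fst d, snd A + t * snd d) | t. True}"

definition pencil :: "real \<times> real \<Rightarrow> (real \<times> real) set set" where
  "pencil A = {line_through A d | d. d \<noteq> (0, 0)}"

definition dir_of_line :: "real \<times> real \<Rightarrow> (real \<times> real) set \<Rightarrow> real \<times> real" where
  "dir_of_line A l = (SOME d. d \<noteq> (0, 0) \<and> l = line_through A d)"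

definition det2 :: "real \<times> real \<Rightarrow> real \<times> real \<Rightarrow> real" where
  "det2 u v = fst u * snd v - snd u * fst v"

text \<open>Cross-ratio (l1,l2;l3,l4) of four lines of the pencil through A (independent of the
  chosen direction vectors).\<close>
definition cross_ratio_lines ::
  "real \<times> real \<Rightarrow> (real \<times> real) set \<Rightarrow> (real \<times> real) set \<Rightarrow> (real \<times> real) set \<Rightarrow> (real \<times> real) set \<Rightarrow> real" where
  "cross_ratio_lines A l1 l2 l3 l4 =
     (let d1 = dir_of_line A l1; d2 = dir_of_line A l2; d3 = dir_of_line A l3; d4 = dir_of_line A l4
      in (det2 d1 d3 * det2 d2 d4) / (det2 d1 d4 * det2 d2 d3))"

definition line_involution :: "real \<times> real \<Rightarrow> ((real \<times> real) set \<Rightarrow> (real \<times> real) set) \<Rightarrow> bool" where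
  "line_involution A f \<longleftrightarrow>
     (\<forall>l\<in>pencil A. f l \<in> pencil A) \<and>
     (\<forall>l\<in>pencil A. f (f l) = l) \<and>
     (\<forall>l1\<in>pencil A. \<forall>l2\<in>pencil A. \<forall>l3\<in>pencil A. \<forall>l4\<in>pencil A.
        distinct [l1, l2, l3, l4] \<longrightarrow>
        cross_ratio_lines A (f l1) (f l2) (f l3) (f l4) = cross_ratio_lines A l1 l2 l3 l4)"

end

theory Submission
  imports Defs
begin

text \<open>Write \<open>P = (x, y)\<close> and \<open>A = (x\<^sub>0, y\<^sub>0)\<close>, so that \<open>P\<^sup>- = (\<alpha>/(\<gamma> x), -y)\<close>.
  Subtracting the curve equations of \<open>P\<close> and \<open>A\<close> gives
  \<open>(y\<^sup>2 - y\<^sub>0\<^sup>2) x x\<^sub>0 = (x - x\<^sub>0)(\<gamma> x x\<^sub>0 - \<alpha>)\<close>, which says that the slopes of \<open>AP\<close> and \<open>AP\<^sup>-\<close>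
  multiply to the constant \<open>\<gamma>/x\<^sub>0\<close>.  Hence \<open>I\<^sub>A\<close> is induced on directions by the linear map
  \<open>(u, v) \<mapsto> (x\<^sub>0 v, \<gamma> u)\<close>.  This map is invertible and traceless, so its square is a scalar:
  it induces an involution of the pencil, and like every invertible linear map it preserves
  cross-ratios.  Non-singularity is only used to get \<open>b \<noteq> 0\<close>, i.e. \<open>\<gamma> \<noteq> 0\<close>.\<close>

lemma det2_scale:
  "det2 (k * fst d, k * snd d) (m * fst e, m * snd e) = k * m * det2 d e"
  by (simp add: det2_def algebra_simps)

lemma det2_eq_0_obtains_scale:
  assumes "d \<noteq> (0, 0)" "e \<noteq> (0, 0)" "det2 d e = 0"
  obtains k where "k \<noteq> 0" "e = (k * fst d, k * snd d)"
proof -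
  obtain d1 d2 e1 e2 where de: "d = (d1, d2)" "e = (e1, e2)"
    by fastforce
  have det: "d1 * e2 = d2 * e1"
    using assms(3) de by (simp add: det2_def)
  show ?thesis
  proof (cases "d1 = 0")
    case True
    then have "d2 \<noteq> 0" "e1 = 0"
      using assms(1) det de by auto
    with assms(2) de show ?thesis
      by (intro that[of "e2 / d2"]) (auto simp: True)
  next
    case False
    then have "e2 = e1 * d2 / d1"
      using det by (simp add: field_simps)
    with assms(2) de False show ?thesis
      by (intro that[of "e1 / d1"]) auto
  qed
qed

lemma line_through_scale:
  assumes "k \<noteq> 0"
  shows "line_through A (k * fst d, k * snd d) = line_through A d"
proof -
  have "(\<exists>t. p = (fst A + t * (k * fst d), snd A + t * (k * snd d))) \<longleftrightarrow>
        (\<exists>t. p = (fst A + t * fst d, snd A + t * snd d))" for p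
  proof
    assume "\<exists>t. p = (fst A + t * (k * fst d), snd A + t * (k * snd d))"
    then show "\<exists>t. p = (fst A + t * fst d, snd A + t * snd d)"
      by (metis mult.assoc)
  next
    assume "\<exists>t. p = (fst A + t * fst d, snd A + t * snd d)"
    then obtain t where "p = (fst A + t * fst d, snd A + t * snd d)" ..
    with assms show "\<exists>t. p = (fst A + t * (k * fst d), snd A + t * (k * snd d))"
      by (intro exI[of _ "t / k"]) simp
  qed
  then show ?thesis
    by (simp add: line_through_def)
qed

lemma line_through_eq_iff:
  assumes "d \<noteq> (0, 0)" "e \<noteq> (0, 0)"
  shows "line_through A d = line_through A e \<longleftrightarrow> det2 d e = 0"
proof
  assume "line_through A d = line_through A e"
  moreover have "(fst A + 1 * fst e, snd A + 1 * snd e) \<in> line_through A e"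
    unfolding line_through_def by blast
  ultimately have "(fst A + 1 * fst e, snd A + 1 * snd e) \<in> line_through A d"
    by simp
  then obtain t where "fst e = t * fst d" "snd e = t * snd d"
    unfolding line_through_def by auto
  then show "det2 d e = 0"
    by (simp add: det2_def)
next
  assume "det2 d e = 0"
  with assms obtain k where "k \<noteq> 0" "e = (k * fst d, k * snd d)"
    by (rule det2_eq_0_obtains_scale)
  then show "line_through A d = line_through A e"
    by (simp add: line_through_scale)
qed

lemma dir_of_line_line_through:
  assumes "d \<noteq> (0, 0)"
  obtains k where "k \<noteq> 0" "dir_of_line A (line_through A d) = (k * fst d, k * snd d)"
proof -
  let ?e = "dir_of_line A (line_through A d)"
  have "?e \<noteq> (0, 0) \<and> line_through A d = line_through A ?e"
    unfolding dir_of_line_def by (rule someI[of _ d]) (use assms in auto)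
  with assms show ?thesis
    by (metis det2_eq_0_obtains_scale line_through_eq_iff that)
qed

lemma cross_ratio_lines_line_through:
  assumes "d1 \<noteq> (0, 0)" "d2 \<noteq> (0, 0)" "d3 \<noteq> (0, 0)" "d4 \<noteq> (0, 0)"
  shows "cross_ratio_lines A (line_through A d1) (line_through A d2)
           (line_through A d3) (line_through A d4) =
         (det2 d1 d3 * det2 d2 d4) / (det2 d1 d4 * det2 d2 d3)"
proof -
  obtain k1 k2 k3 k4 where k: "k1 \<noteq> 0" "k2 \<noteq> 0" "k3 \<noteq> 0" "k4 \<noteq> 0"
    and "dir_of_line A (line_through A d1) = (k1 * fst d1, k1 * snd d1)"
      "dir_of_line A (line_through A d2) = (k2 * fst d2, k2 * snd d2)"
      "dir_of_line A (line_through A d3) = (k3 * fst d3, k3 * snd d3)"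
      "dir_of_line A (line_through A d4) = (k4 * fst d4, k4 * snd d4)"
    using assms by (metis dir_of_line_line_through)
  then show ?thesis
    by (simp add: cross_ratio_lines_def det2_scale)
qed

lemma pencil_dir_of_line:
  assumes "l \<in> pencil A"
  shows "dir_of_line A l \<noteq> (0, 0)" "line_through A (dir_of_line A l) = l"
proof -
  from assms obtain d where d: "d \<noteq> (0, 0)" "l = line_through A d"
    unfolding pencil_def by blast
  then obtain k where k: "k \<noteq> 0" "dir_of_line A l = (k * fst d, k * snd d)"
    using dir_of_line_line_through by blast
  show "dir_of_line A l \<noteq> (0, 0)"
    using d(1) k by (cases d) simp
  show "line_through A (dir_of_line A l) = l"
    using d(2) k by (simp add: line_through_scale)
qed


definition mat2_apply :: "real \<Rightarrow> real \<Rightarrow> real \<Rightarrow> real \<Rightarrow> real \<times> real \<Rightarrow> real \<times> real" where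
  "mat2_apply p q r s u = (p * fst u + q * snd u, r * fst u + s * snd u)"

definition pencil_map ::
  "real \<times> real \<Rightarrow> (real \<times> real \<Rightarrow> real \<times> real) \<Rightarrow> (real \<times> real) set \<Rightarrow> (real \<times> real) set" where
  "pencil_map A M l = line_through A (M (dir_of_line A l))"

lemma det2_mat2_apply:
  "det2 (mat2_apply p q r s u) (mat2_apply p q r s v) = (p * s - q * r) * det2 u v"
  by (simp add: mat2_apply_def det2_def algebra_simps)

lemma mat2_apply_scale:
  "mat2_apply p q r s (k * fst u, k * snd u) =
     (k * fst (mat2_apply p q r s u), k * snd (mat2_apply p q r s u))"
  by (simp add: mat2_apply_def algebra_simps)

lemma mat2_apply_nonzero:
  assumes "p * s - q * r \<noteq> 0" "u \<noteq> (0, 0)"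
  shows "mat2_apply p q r s u \<noteq> (0, 0)"
proof
  assume "mat2_apply p q r s u = (0, 0)"
  then have rows: "p * fst u + q * snd u = 0" "r * fst u + s * snd u = 0"
    by (simp_all add: mat2_apply_def)
  have "(p * s - q * r) * fst u = s * (p * fst u + q * snd u) - q * (r * fst u + s * snd u)"
    "(p * s - q * r) * snd u = p * (r * fst u + s * snd u) - r * (p * fst u + q * snd u)"
    by (simp_all add: algebra_simps)
  then have "(p * s - q * r) * fst u = 0" "(p * s - q * r) * snd u = 0"
    by (simp_all only: rows)
  then have "fst u = 0" "snd u = 0"
    using assms(1) by simp_all
  with assms(2) show False
    by (cases u) simp
qed

lemma mat2_apply_twice_traceless:
  assumes "p + s = 0"
  shows "mat2_apply p q r s (mat2_apply p q r s u) =
           (- (p * s - q * r) * fst u, - (p * s - q * r) * snd u)"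
proof -
  have "s = - p" using assms by simp
  then show ?thesis by (simp add: mat2_apply_def algebra_simps)
qed

lemma pencil_map_line_through:
  assumes "d \<noteq> (0, 0)"
  shows "pencil_map A (mat2_apply p q r s) (line_through A d) = line_through A (mat2_apply p q r s d)"
proof -
  obtain k where "k \<noteq> 0" "dir_of_line A (line_through A d) = (k * fst d, k * snd d)"
    using assms by (rule dir_of_line_line_through)
  then show ?thesis
    by (simp add: pencil_map_def mat2_apply_scale line_through_scale)
qed

lemma line_involution_pencil_map:
  assumes traceless: "p + s = 0" and invertible: "p * s - q * r \<noteq> 0"
  shows "line_involution A (pencil_map A (mat2_apply p q r s))"
  unfolding line_involution_def
proof (intro conjI ballI impI)
  let ?M = "mat2_apply p q r s"
  fix l assume l: "l \<in> pencil A"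
  let ?d = "dir_of_line A l"
  have d: "?d \<noteq> (0, 0)" "line_through A ?d = l"
    using l by (rule pencil_dir_of_line)+
  show "pencil_map A ?M l \<in> pencil A"
    unfolding pencil_map_def pencil_def using mat2_apply_nonzero[OF invertible d(1)] by blast
  have "pencil_map A ?M (pencil_map A ?M l) = line_through A (?M (?M ?d))"
    unfolding pencil_map_def[of A ?M l]
    using pencil_map_line_through mat2_apply_nonzero[OF invertible d(1)] by blast
  also have "\<dots> = l"
    using d invertible by (simp add: mat2_apply_twice_traceless[OF traceless] line_through_scale)
  finally show "pencil_map A ?M (pencil_map A ?M l) = l" .
next
  let ?M = "mat2_apply p q r s"
  fix l1 l2 l3 l4
  assume "l1 \<in> pencil A" "l2 \<in> pencil A" "l3 \<in> pencil A" "l4 \<in> pencil A"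
  then obtain d1 d2 d3 d4 where d: "d1 \<noteq> (0, 0)" "d2 \<noteq> (0, 0)" "d3 \<noteq> (0, 0)" "d4 \<noteq> (0, 0)"
    and l: "l1 = line_through A d1" "l2 = line_through A d2"
      "l3 = line_through A d3" "l4 = line_through A d4"
    unfolding pencil_def by blast
  have "cross_ratio_lines A (pencil_map A ?M l1) (pencil_map A ?M l2)
          (pencil_map A ?M l3) (pencil_map A ?M l4) =
        (det2 (?M d1) (?M d3) * det2 (?M d2) (?M d4)) / (det2 (?M d1) (?M d4) * det2 (?M d2) (?M d3))"
    unfolding l using d mat2_apply_nonzero[OF invertible]
    by (simp add: pencil_map_line_through cross_ratio_lines_line_through)
  also have "\<dots> = (det2 d1 d3 * det2 d2 d4) / (det2 d1 d4 * det2 d2 d3)"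
    using invertible by (simp add: det2_mat2_apply)
  also have "\<dots> = cross_ratio_lines A l1 l2 l3 l4"
    unfolding l using d by (simp add: cross_ratio_lines_line_through)
  finally show "cross_ratio_lines A (pencil_map A ?M l1) (pencil_map A ?M l2)
      (pencil_map A ?M l3) (pencil_map A ?M l4) = cross_ratio_lines A l1 l2 l3 l4" .
qed


lemma nonsingular_cubic_b_nonzero:
  assumes "nonsingular_cubic a b"
  shows "b \<noteq> 0"
proof
  assume "b = 0"
  then have "cubF a b 0 0 1 = 0 \<and> cubF_X a b 0 0 1 = 0 \<and> cubF_Y a b 0 0 1 = 0 \<and> cubF_Z a b 0 0 1 = 0"
    by (simp add: cubF_def cubF_X_def cubF_Y_def cubF_Z_def)
  with assms show False
    unfolding nonsingular_cubic_def by fastforce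
qed

lemma on_curve_Aff_fst_nonzero:
  assumes "\<alpha> \<noteq> 0" "on_curve \<alpha> \<beta> \<gamma> (Aff x y)"
  shows "x \<noteq> 0"
  using assms by auto

lemma conj_pt_conj_pt:
  assumes "\<alpha> \<noteq> 0" "\<gamma> \<noteq> 0" "on_curve \<alpha> \<beta> \<gamma> P"
  shows "conj_pt \<alpha> \<gamma> (conj_pt \<alpha> \<gamma> P) = P"
  using assms by (cases P) (auto simp: field_simps)

lemma det2_dir_to_conj_pt:
  assumes "\<alpha> \<noteq> 0" "\<gamma> \<noteq> 0"
    and A: "on_curve \<alpha> \<beta> \<gamma> (Aff x0 y0)" and P: "on_curve \<alpha> \<beta> \<gamma> P"
  shows "det2 (mat2_apply 0 x0 \<gamma> 0 (dir_to (x0, y0) P)) (dir_to (x0, y0) (conj_pt \<alpha> \<gamma> P)) = 0"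
proof (cases P)
  case (Aff x y)
  have x: "x \<noteq> 0"
    using assms(1) P Aff by auto
  have "(y^2 - y0^2) * (x * x0) = x0 * (y^2 * x) - x * (y0^2 * x0)"
    by (simp add: algebra_simps)
  also have "\<dots> = x0 * (\<alpha> + \<beta> * x + \<gamma> * x^2) - x * (\<alpha> + \<beta> * x0 + \<gamma> * x0^2)"
    using A P Aff by simp
  also have "\<dots> = (x - x0) * (\<gamma> * x * x0 - \<alpha>)"
    by (simp add: algebra_simps power2_eq_square)
  finally have chord: "(y^2 - y0^2) * (x * x0) = (x - x0) * (\<gamma> * x * x0 - \<alpha>)" .
  have "x * det2 (mat2_apply 0 x0 \<gamma> 0 (dir_to (x0, y0) P)) (dir_to (x0, y0) (conj_pt \<alpha> \<gamma> P)) =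
          - ((y^2 - y0^2) * (x * x0)) - (x - x0) * (\<alpha> - \<gamma> * x * x0)"
    using Aff x assms(2) by (simp add: mat2_apply_def det2_def field_simps power2_eq_square)
  also have "\<dots> = 0"
    unfolding chord by (simp add: algebra_simps)
  finally show ?thesis
    using x by simp
qed (simp_all add: mat2_apply_def det2_def)

lemma pencil_map_line_through_conj_pt:
  assumes "\<alpha> \<noteq> 0" "\<gamma> \<noteq> 0"
    and A: "on_curve \<alpha> \<beta> \<gamma> (Aff x0 y0)" and P: "on_curve \<alpha> \<beta> \<gamma> P"
    and "P \<noteq> Aff x0 y0" "P \<noteq> conj_pt \<alpha> \<gamma> (Aff x0 y0)"
  shows "pencil_map (x0, y0) (mat2_apply 0 x0 \<gamma> 0) (line_through (x0, y0) (dir_to (x0, y0) P)) =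
           line_through (x0, y0) (dir_to (x0, y0) (conj_pt \<alpha> \<gamma> P))"
proof -
  have x0: "x0 \<noteq> 0"
    using assms(1) A by (rule on_curve_Aff_fst_nonzero)
  have dir_nonzero: "dir_to (x0, y0) Q \<noteq> (0, 0)" if "Q \<noteq> Aff x0 y0" for Q
    using that by (cases Q) auto
  have "conj_pt \<alpha> \<gamma> P \<noteq> Aff x0 y0"
    using assms conj_pt_conj_pt by metis
  then show ?thesis
    using assms x0 dir_nonzero mat2_apply_nonzero[of 0 0 x0 \<gamma>]
    by (simp add: pencil_map_line_through line_through_eq_iff det2_dir_to_conj_pt)
qed

theorem lemma8:
  fixes a b r0 r1 x0 y0 :: real
  assumes nonsing: "nonsingular_cubic a b"
    and r0: "r0 \<noteq> 0" and r1: "r1 \<noteq> 0"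
    and r_on: "cubF a b r0 r1 1 = 0"
    and A_on: "on_curve (r0^3 / r1^2) (a * r0^2 / r1^2) (b * r0 / r1^2) (Aff x0 y0)"
  shows "\<exists>f. line_involution (x0, y0) f \<and>
           (\<forall>P. on_curve (r0^3 / r1^2) (a * r0^2 / r1^2) (b * r0 / r1^2) P \<and>
                P \<noteq> Aff x0 y0 \<and> P \<noteq> conj_pt (r0^3 / r1^2) (b * r0 / r1^2) (Aff x0 y0) \<longrightarrow>
                f (line_through (x0, y0) (dir_to (x0, y0) P)) =
                line_through (x0, y0) (dir_to (x0, y0) (conj_pt (r0^3 / r1^2) (b * r0 / r1^2) P)))"
proof -
  define \<alpha> where "\<alpha> = r0^3 / r1^2"
  define \<gamma> where "\<gamma> = b * r0 / r1^2"
  have \<alpha>: "\<alpha> \<noteq> 0"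
    using r0 r1 by (simp add: \<alpha>_def)
  have \<gamma>: "\<gamma> \<noteq> 0"
    using r0 r1 nonsingular_cubic_b_nonzero[OF nonsing] by (simp add: \<gamma>_def)
  have "x0 \<noteq> 0"
    using \<alpha> A_on unfolding \<alpha>_def by (rule on_curve_Aff_fst_nonzero)
  then have "line_involution (x0, y0) (pencil_map (x0, y0) (mat2_apply 0 x0 \<gamma> 0))"
    using \<gamma> by (intro line_involution_pencil_map) simp_all
  then show ?thesis
    using pencil_map_line_through_conj_pt[OF \<alpha> \<gamma>] A_on unfolding \<alpha>_def \<gamma>_def by blast
qed

end
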